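(* For every $n\ge 2$, $\sigma(P_n\times P_n)\ge n-1$ and $\sigma(T_n)\ge \lfloor (n-1)/2\rfloor$.
   Context: $P_n\times P_n$ is the grid with vertex set $\{1,\dots,n\}^2$, vertices adjacent iff they differ by $1$ in exactly one coordinate. $T_n$ is the graph whose vertices are the points of the planar triangular lattice lying in a closed equilateral triangle of side length $n-1$ with lattice-point corners (each side contains $n$ vertices), two vertices adjacent iff at Euclidean distance $1$. The stretch of a connected graph $G$ is $\sigma(G)=\min_T\max_{uv\in E(G)} d_T(u,v)$, the minimum over spanning trees $T$ of $G$. *)

theory Defs
  imports Main
begin

text \<open>Finite simple graphs are given by a vertex set V and an edge set E of
two-element subsets of V.\<close>

definition walk :: "'a set set \<Rightarrow> 'a list \<Rightarrow> bool" where
  "walk E p \<longleftrightarrow> p \<noteq> [] \<and> (\<forall>i < length p - 1. {p ! i, p ! Suc i} \<in> E)"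

definition connected_graph :: "'a set \<Rightarrow> 'a set set \<Rightarrow> bool" where
  "connected_graph V E \<longleftrightarrow>
     (\<forall>u\<in>V. \<forall>v\<in>V. \<exists>p. walk E p \<and> set p \<subseteq> V \<and> hd p = u \<and> last p = v)"

definition is_cycle :: "'a set set \<Rightarrow> 'a list \<Rightarrow> bool" where
  "is_cycle E p \<longleftrightarrow> length p \<ge> 3 \<and> distinct p \<and> walk E p \<and> {last p, hd p} \<in> E"

definition acyclic_graph :: "'a set set \<Rightarrow> bool" where
  "acyclic_graph E \<longleftrightarrow> \<not> (\<exists>p. is_cycle E p)"

definition spanning_tree :: "'a set \<Rightarrow> 'a set set \<Rightarrow> 'a set set \<Rightarrow> bool" where
  "spanning_tree V E T \<longleftrightarrow> T \<subseteq> E \<and> connected_graph V T \<and> acyclic_graph T"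

definition gdist :: "'a set set \<Rightarrow> 'a \<Rightarrow> 'a \<Rightarrow> nat" where
  "gdist T u v = (LEAST k. \<exists>p. walk T p \<and> hd p = u \<and> last p = v \<and> length p = Suc k)"

definition stretch :: "'a set \<Rightarrow> 'a set set \<Rightarrow> nat" where
  "stretch V E = Min ((\<lambda>T. Max {gdist T u v | u v. {u, v} \<in> E}) ` {T. spanning_tree V E T})"

definition grid_V :: "nat \<Rightarrow> (int \<times> int) set" where
  "grid_V n = {1..int n} \<times> {1..int n}"

definition grid_E :: "nat \<Rightarrow> (int \<times> int) set set" where
  "grid_E n = {{(a, b), (c, d)} | a b c d. (a, b) \<in> grid_V n \<and> (c, d) \<in> grid_V n \<and>
                 \<bar>a - c\<bar> + \<bar>b - d\<bar> = 1}"

text \<open>Triangular grid T_n, in lattice coordinates: (i,j) stands for the point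
  i*(1,0) + j*(1/2, sqrt 3/2); the triangle has corners (0,0), (n-1,0), (0,n-1).
  Two lattice points are at Euclidean distance 1 iff their coordinate difference
  is one of (+-1,0), (0,+-1), (1,-1), (-1,1).\<close>
definition tri_V :: "nat \<Rightarrow> (int \<times> int) set" where
  "tri_V n = {(i, j). 0 \<le> i \<and> 0 \<le> j \<and> i + j \<le> int n - 1}"

definition tri_E :: "nat \<Rightarrow> (int \<times> int) set set" where
  "tri_E n = {{(a, b), (c, d)} | a b c d. (a, b) \<in> tri_V n \<and> (c, d) \<in> tri_V n \<and>
                 (c - a, d - b) \<in> {(1, 0), (-1, 0), (0, 1), (0, -1), (1, -1), (-1, 1)}}"

end

theory Submission
  imports Defs "HOL-Library.Transitive_Closure_Table"
begin

text \<open>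
  Fix a spanning tree T and a level function g changing by at most 1 along edges. On the tree
  path from a vertex p below level K to a vertex q at level at least K there is a tree edge xy
  with g y = K whose deletion separates p from q. Every walk of G from p to q crosses this cut
  by some edge ab of G, and the tree path from a to b passes through y. So if h also changes by
  at most 1 along edges and h \<le> 0 on the walk, then d_T(a, b) \<ge> 2 h(y). Two such walks with
  functions h1, h2 bound the stretch of T by h1(y) + h2(y) from below.

  For the grid take g = a + b and K = n + 1, the two boundary walks from (1,1) to (n,n), and
  h1 = min (b - 1) (n - a) with its mirror image h2; on the antidiagonal h1 + h2 = n - 1.
  For the triangle with corners (0,0), (n-1,0), (0,n-1) take g = a, K = \<lfloor>(n-1)/2\<rfloor>,
  the bottom side and the walk along the two other sides, with h1 = b and
  h2 = min a (n - 1 - a - b); then h1 + h2 \<ge> K on level K.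
\<close>

section \<open>Walks and reachability\<close>

definition adj :: "'a set set \<Rightarrow> 'a \<Rightarrow> 'a \<Rightarrow> bool" where
  "adj S u v \<longleftrightarrow> {u, v} \<in> S"

lemma symp_adj: "symp (adj S)"
  by (auto intro: sympI simp: adj_def insert_commute)

lemma adj_rtranclp_sym: "(adj S)\<^sup>*\<^sup>* u v \<Longrightarrow> (adj S)\<^sup>*\<^sup>* v u"
  using sympD[OF symp_rtranclp[OF symp_adj]] .

lemma walk_Nil [simp]: "\<not> walk S []"
  by (simp add: walk_def)

lemma walk_singleton [simp]: "walk S [x]"
  by (simp add: walk_def)

lemma walk_Cons_Cons [simp]: "walk S (x # y # ys) \<longleftrightarrow> {x, y} \<in> S \<and> walk S (y # ys)"
  by (auto simp: walk_def less_Suc_eq_0_disj)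

lemma walk_mono: "walk S p \<Longrightarrow> S \<subseteq> S' \<Longrightarrow> walk S' p"
  by (auto simp: walk_def)

lemma walk_map: "walk S p \<Longrightarrow> (\<And>u v. {u, v} \<in> S \<Longrightarrow> {f u, f v} \<in> S) \<Longrightarrow> walk S (map f p)"
  by (auto simp: walk_def)

lemma walk_map_upto:
  fixes f :: "int \<Rightarrow> 'a"
  assumes "i \<le> j" "\<And>k. i \<le> k \<Longrightarrow> k < j \<Longrightarrow> {f k, f (k + 1)} \<in> S"
  shows "walk S (map f [i..j])"
  unfolding walk_def
proof (intro conjI allI impI)
  show "map f [i..j] \<noteq> []"
    using assms(1) by simp
  fix k assume "k < length (map f [i..j]) - 1"
  then have "i + int k < j"
    by simp
  then show "{map f [i..j] ! k, map f [i..j] ! Suc k} \<in> S"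
    using assms(2)[of "i + int k"] by (simp add: ac_simps)
qed

lemma map_upto_ends:
  assumes "i \<le> j"
  shows "hd (map f [i..j]) = f i" "last (map f [i..j]) = f j"
  by (subst upto_rec1[OF assms], simp) (subst upto_rec2[OF assms], simp)

lemma walk_imp_rtranclp: "walk S p \<Longrightarrow> (adj S)\<^sup>*\<^sup>* (hd p) (last p)"
  by (induction p rule: induct_list012) (auto simp: adj_def intro: converse_rtranclp_into_rtranclp)

lemma rtrancl_path_imp_walk:
  "rtrancl_path (adj S) x xs y \<Longrightarrow> walk S (x # xs) \<and> last (x # xs) = y \<and> set xs \<subseteq> \<Union>S"
  by (induction rule: rtrancl_path.induct) (auto simp: adj_def)

lemma rtranclp_imp_distinct_walk:
  assumes "(adj S)\<^sup>*\<^sup>* u v"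
  obtains p where "walk S p" "hd p = u" "last p = v" "distinct p" "set p \<subseteq> insert u (\<Union>S)"
proof -
  obtain xs where "rtrancl_path (adj S) u xs v"
    using assms by (auto simp: rtranclp_eq_rtrancl_path)
  then obtain ys where ys: "rtrancl_path (adj S) u ys v" "distinct (u # ys)"
    by (rule rtrancl_path_distinct)
  from rtrancl_path_imp_walk[OF ys(1)] ys(2) show thesis
    by (intro that[of "u # ys"]) auto
qed

lemma connected_graph_iff_rtranclp:
  assumes "\<Union>S \<subseteq> V"
  shows "connected_graph V S \<longleftrightarrow> (\<forall>u\<in>V. \<forall>v\<in>V. (adj S)\<^sup>*\<^sup>* u v)"
proof
  show "\<forall>u\<in>V. \<forall>v\<in>V. (adj S)\<^sup>*\<^sup>* u v" if conn: "connected_graph V S"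
  proof (intro ballI)
    fix u v assume "u \<in> V" "v \<in> V"
    then obtain p where "walk S p" "hd p = u" "last p = v"
      using conn unfolding connected_graph_def by blast
    then show "(adj S)\<^sup>*\<^sup>* u v"
      using walk_imp_rtranclp by blast
  qed
  show "connected_graph V S" if reach: "\<forall>u\<in>V. \<forall>v\<in>V. (adj S)\<^sup>*\<^sup>* u v"
    unfolding connected_graph_def
  proof (intro ballI)
    fix u v assume "u \<in> V" "v \<in> V"
    then obtain p where "walk S p" "hd p = u" "last p = v" "set p \<subseteq> insert u (\<Union>S)"
      using reach by (meson rtranclp_imp_distinct_walk)
    then show "\<exists>p. walk S p \<and> set p \<subseteq> V \<and> hd p = u \<and> last p = v"
      using \<open>u \<in> V\<close> assms by blast
  qed
qed

lemma connected_graph_if_walks_from: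
  assumes "\<Union>S \<subseteq> V" and walks: "\<And>v. v \<in> V \<Longrightarrow> \<exists>W. walk S W \<and> hd W = r \<and> last W = v"
  shows "connected_graph V S"
  unfolding connected_graph_iff_rtranclp[OF assms(1)]
proof (intro ballI)
  fix u v assume "u \<in> V" "v \<in> V"
  then have "(adj S)\<^sup>*\<^sup>* r u" "(adj S)\<^sup>*\<^sup>* r v"
    using walks walk_imp_rtranclp by metis+
  then show "(adj S)\<^sup>*\<^sup>* u v"
    using adj_rtranclp_sym rtranclp_trans by metis
qed

section \<open>Spanning trees\<close>

lemma acyclic_edge_separates:
  assumes "acyclic_graph T" "{x, y} \<in> T" "x \<noteq> y"
  shows "\<not> (adj (T - {{x, y}}))\<^sup>*\<^sup>* x y"
proof
  assume "(adj (T - {{x, y}}))\<^sup>*\<^sup>* x y"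
  then obtain p where p: "walk (T - {{x, y}}) p" "hd p = x" "last p = y" "distinct p"
    by (rule rtranclp_imp_distinct_walk)
  moreover have "p \<noteq> [x]"
    using p(3) \<open>x \<noteq> y\<close> by auto
  ultimately obtain z zs where p_eq: "p = x # z # zs"
    \<comment> \<open>the case rule of remdups_adj splits a list into [], [x] and x # y # xs\<close>
    by (cases p rule: remdups_adj.cases) auto
  have "zs \<noteq> []"
    using p unfolding p_eq by auto
  then have "length p \<ge> 3"
    by (simp add: p_eq Suc_le_eq)
  moreover have "walk T p"
    using p(1) by (rule walk_mono) blast
  moreover have "{last p, hd p} \<in> T"
    using p(2,3) assms(2) by (simp add: insert_commute)
  ultimately have "is_cycle T p"
    using p(4) by (simp add: is_cycle_def)
  then show False
    using assms(1) by (auto simp: acyclic_graph_def)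
qed

lemma cycle_walk_avoids_closing_edge:
  assumes "is_cycle T c"
  shows "walk (T - {{last c, hd c}}) c"
proof -
  have c: "walk T c" "distinct c" "length c \<ge> 3"
    using assms by (auto simp: is_cycle_def)
  have "{c ! i, c ! Suc i} \<noteq> {c ! (length c - 1), c ! 0}" if "i < length c - 1" for i
  proof -
    have i: "Suc i < length c"
      using that by linarith
    then have len: "0 < length c" "i < length c" "length c - 1 < length c"
      by auto
    have "c ! i \<noteq> c ! (length c - 1)"
      using nth_eq_iff_index_eq[OF c(2) len(2,3)] that by simp
    moreover have "\<not> (c ! i = c ! 0 \<and> c ! Suc i = c ! (length c - 1))"
      using nth_eq_iff_index_eq[OF c(2) len(2,1)] nth_eq_iff_index_eq[OF c(2) i len(3)] c(3)
      by auto
    ultimately show ?thesis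
      by (auto simp: doubleton_eq_iff)
  qed
  then show ?thesis
    using c by (auto simp: walk_def hd_conv_nth last_conv_nth)
qed

lemma rtranclp_remove_bypassed_edge:
  assumes "(adj (S - {{u, v}}))\<^sup>*\<^sup>* u v" "(adj S)\<^sup>*\<^sup>* a b"
  shows "(adj (S - {{u, v}}))\<^sup>*\<^sup>* a b"
  using assms(2)
proof (induction rule: rtranclp_induct)
  case (step b c)
  have "(adj (S - {{u, v}}))\<^sup>*\<^sup>* b c"
  proof (cases "{b, c} = {u, v}")
    case True
    then show ?thesis
      using assms(1) adj_rtranclp_sym by (auto simp: doubleton_eq_iff)
  next
    case False
    then show ?thesis
      using step.hyps(2) by (intro r_into_rtranclp) (simp add: adj_def)
  qed
  with step.IH show ?case
    by (rule rtranclp_trans)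
qed simp

lemma spanning_tree_exists:
  assumes "finite E" "\<Union>E \<subseteq> V" "connected_graph V E"
  obtains T where "spanning_tree V E T"
proof -
  obtain T where T: "T \<subseteq> E" "connected_graph V T"
    and min: "\<And>T'. T' \<subseteq> E \<and> connected_graph V T' \<Longrightarrow> card T \<le> card T'"
    using ex_has_least_nat[of "\<lambda>T. T \<subseteq> E \<and> connected_graph V T" E card] assms(3) by blast
  have sub: "\<Union>T \<subseteq> V"
    using T(1) assms(2) by blast
  have "acyclic_graph T"
    unfolding acyclic_graph_def
  proof
    assume "\<exists>c. is_cycle T c"
    then obtain c where c: "is_cycle T c" ..
    define e where "e = {last c, hd c}"
    have "e \<in> T"
      using c by (simp add: is_cycle_def e_def)
    have bypass: "(adj (T - {e}))\<^sup>*\<^sup>* (last c) (hd c)"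
      using walk_imp_rtranclp[OF cycle_walk_avoids_closing_edge[OF c]]
      unfolding e_def by (rule adj_rtranclp_sym)
    have "(adj (T - {e}))\<^sup>*\<^sup>* u v" if "(adj T)\<^sup>*\<^sup>* u v" for u v
      using rtranclp_remove_bypassed_edge[OF bypass[unfolded e_def] that] unfolding e_def .
    moreover have "\<Union>(T - {e}) \<subseteq> V"
      using sub by blast
    ultimately have "connected_graph V (T - {e})"
      using T(2) sub by (simp add: connected_graph_iff_rtranclp)
    then have "card T \<le> card (T - {e})"
      using T(1) min by blast
    moreover have "card (T - {e}) < card T"
      using \<open>e \<in> T\<close> T(1) assms(1) by (meson card_Diff1_less finite_subset)
    ultimately show False
      by simp
  qed
  then show thesis
    using T by (intro that) (simp add: spanning_tree_def)
qed

section \<open>Cutting a spanning tree at a level\<close>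

definition edge_lipschitz :: "'a set set \<Rightarrow> ('a \<Rightarrow> int) \<Rightarrow> bool" where
  "edge_lipschitz E h \<longleftrightarrow> (\<forall>u v. {u, v} \<in> E \<longrightarrow> \<bar>h u - h v\<bar> \<le> 1)"

lemma edge_lipschitz_subset: "edge_lipschitz E h \<Longrightarrow> T \<subseteq> E \<Longrightarrow> edge_lipschitz T h"
  by (auto simp: edge_lipschitz_def)

lemma walk_edge_lipschitz:
  assumes "walk S p" "edge_lipschitz S h" "i \<le> j" "j < length p"
  shows "\<bar>h (p ! j) - h (p ! i)\<bar> \<le> int (j - i)"
  using assms(3,4)
proof (induction j rule: dec_induct)
  case (step k)
  have "{p ! k, p ! Suc k} \<in> S"
    using assms(1) step.prems by (auto simp: walk_def)
  then have "\<bar>h (p ! k) - h (p ! Suc k)\<bar> \<le> 1"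
    using assms(2) by (auto simp: edge_lipschitz_def)
  then show ?case
    using step by (simp add: of_nat_diff)
qed simp

lemma walk_through_vertex_bound:
  assumes "walk S p" "edge_lipschitz S h" "y \<in> set p"
  shows "2 * h y \<le> int (length p - 1) + h (hd p) + h (last p)"
proof -
  obtain l where l: "l < length p" "p ! l = y"
    using assms(3) by (auto simp: in_set_conv_nth)
  have "p \<noteq> []"
    using l(1) by auto
  then have ends: "hd p = p ! 0" "last p = p ! (length p - 1)"
    by (simp_all add: hd_conv_nth last_conv_nth)
  have "\<bar>h y - h (p ! 0)\<bar> \<le> int l"
    using walk_edge_lipschitz[OF assms(1,2), of 0 l] l by simp
  moreover have "\<bar>h (p ! (length p - 1)) - h y\<bar> \<le> int (length p - 1 - l)"
    using walk_edge_lipschitz[OF assms(1,2), of l "length p - 1"] l by simp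
  ultimately show ?thesis
    using l(1) unfolding ends by linarith
qed

lemma nat_crossing:
  fixes f :: "nat \<Rightarrow> 'a"
  assumes "P (f 0)" "\<not> P (f N)"
  obtains k where "k < N" "P (f k)" "\<not> P (f (Suc k))"
  using assms(2)
proof (induction N)
  case 0
  then show ?case using assms(1) by simp
next
  case (Suc N)
  then show ?case by (cases "P (f N)") (auto intro: less_SucI)
qed

lemma walk_crossing:
  assumes "walk S W" "P (hd W)" "\<not> P (last W)"
  obtains i where "i < length W - 1" "P (W ! i)" "\<not> P (W ! Suc i)" "{W ! i, W ! Suc i} \<in> S"
proof -
  have "W \<noteq> []"
    using assms(1) by auto
  then obtain i where "i < length W - 1" "P (W ! i)" "\<not> P (W ! Suc i)"
    using nat_crossing[of P "(!) W" "length W - 1"] assms(2,3)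
    by (auto simp: hd_conv_nth last_conv_nth)
  with assms(1) show thesis
    by (intro that) (auto simp: walk_def)
qed

lemma distinct_walk_split_at_edge:
  assumes "walk S W" "distinct W" "j < length W - 1"
  defines "e \<equiv> {W ! j, W ! Suc j}"
  shows "(adj (S - {e}))\<^sup>*\<^sup>* (hd W) (W ! j)" "(adj (S - {e}))\<^sup>*\<^sup>* (W ! Suc j) (last W)"
proof -
  have other: "{W ! i, W ! Suc i} \<noteq> e" if "i < length W - 1" "i \<noteq> j" for i
    using that assms(2,3) by (auto simp: e_def doubleton_eq_iff nth_eq_iff_index_eq)
  have "walk (S - {e}) (take (Suc j) W)"
    using assms(1,3) other by (auto simp: walk_def)
  moreover have "last (take (Suc j) W) = W ! j"
    using assms(3) by (simp add: take_Suc_conv_app_nth)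
  ultimately show "(adj (S - {e}))\<^sup>*\<^sup>* (hd W) (W ! j)"
    using walk_imp_rtranclp[of "S - {e}" "take (Suc j) W"] by simp
  have "walk (S - {e}) (drop (Suc j) W)"
    using assms(1,3) other by (auto simp: walk_def)
  moreover have "hd (drop (Suc j) W) = W ! Suc j" "last (drop (Suc j) W) = last W"
    using assms(3) by (simp_all add: hd_drop_conv_nth)
  ultimately show "(adj (S - {e}))\<^sup>*\<^sup>* (W ! Suc j) (last W)"
    using walk_imp_rtranclp[of "S - {e}" "drop (Suc j) W"] by simp
qed

lemma walk_crosses_cut_edge:
  assumes "walk T W" "(adj (T - {{x, y}}))\<^sup>*\<^sup>* x (hd W)" "\<not> (adj (T - {{x, y}}))\<^sup>*\<^sup>* x (last W)"
  shows "y \<in> set W"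
proof -
  let ?R = "(adj (T - {{x, y}}))\<^sup>*\<^sup>* x"
  obtain i where i: "i < length W - 1" "?R (W ! i)" "\<not> ?R (W ! Suc i)" "{W ! i, W ! Suc i} \<in> T"
    using walk_crossing[OF assms] .
  have "{W ! i, W ! Suc i} = {x, y}"
  proof (rule ccontr)
    assume "{W ! i, W ! Suc i} \<noteq> {x, y}"
    with i(4) have "adj (T - {{x, y}}) (W ! i) (W ! Suc i)"
      by (simp add: adj_def)
    with i(2,3) show False
      by (meson rtranclp.rtrancl_into_rtrancl)
  qed
  moreover have "W ! Suc i \<noteq> x"
    using i(3) by auto
  ultimately have "W ! Suc i = y"
    by (auto simp: doubleton_eq_iff)
  moreover have "Suc i < length W"
    using i(1) by linarith
  ultimately show ?thesis
    using nth_mem by metis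
qed

definition tree_stretch :: "'a set set \<Rightarrow> 'a set set \<Rightarrow> nat" where
  "tree_stretch E T = Max {gdist T u v | u v. {u, v} \<in> E}"

lemma gdist_le_tree_stretch:
  assumes "finite (\<Union>E)" "{u, v} \<in> E"
  shows "gdist T u v \<le> tree_stretch E T"
proof -
  have "{gdist T u v | u v. {u, v} \<in> E} \<subseteq> (\<lambda>(u, v). gdist T u v) ` (\<Union>E \<times> \<Union>E)"
    by force
  then have "finite {gdist T u v | u v. {u, v} \<in> E}"
    using assms(1) finite_subset by blast
  then show ?thesis
    unfolding tree_stretch_def using assms(2) by (intro Max_ge) blast+
qed

lemma shortest_walk_exists:
  assumes "connected_graph V T" "u \<in> V" "v \<in> V"
  obtains W where "walk T W" "hd W = u" "last W = v" "length W = Suc (gdist T u v)"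
proof -
  obtain p where p: "walk T p" "hd p = u" "last p = v"
    using assms unfolding connected_graph_def by blast
  then have "length p = Suc (length p - 1)"
    by (cases p) auto
  with p have "\<exists>k p. walk T p \<and> hd p = u \<and> last p = v \<and> length p = Suc k"
    by blast
  then have "\<exists>p. walk T p \<and> hd p = u \<and> last p = v \<and> length p = Suc (gdist T u v)"
    unfolding gdist_def by (rule LeastI_ex)
  with that show thesis
    by blast
qed

lemma stretch_lower_bound:
  assumes "finite V" "\<Union>E \<subseteq> V" "connected_graph V E"
    and "\<And>T. spanning_tree V E T \<Longrightarrow> B \<le> tree_stretch E T"
  shows "B \<le> stretch V E"
proof -
  have "E \<subseteq> Pow V"
    using assms(2) by blast
  then have "finite E"
    using assms(1) by (meson finite_Pow_iff finite_subset)
  moreover have "{T. spanning_tree V E T} \<subseteq> Pow E"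
    by (auto simp: spanning_tree_def)
  ultimately have "finite {T. spanning_tree V E T}"
    by (meson finite_Pow_iff finite_subset)
  moreover obtain T where "spanning_tree V E T"
    using spanning_tree_exists \<open>finite E\<close> assms(2,3) by blast
  ultimately show ?thesis
    using assms(4) unfolding stretch_def tree_stretch_def[symmetric] by (subst Min_ge_iff) auto
qed

lemma cut_vertex_bound:
  assumes T: "spanning_tree V E T" "\<Union>E \<subseteq> V" "finite V"
    and cut: "\<not> (adj (T - {{x, y}}))\<^sup>*\<^sup>* x y" "(adj (T - {{x, y}}))\<^sup>*\<^sup>* x (hd P)"
      "(adj (T - {{x, y}}))\<^sup>*\<^sup>* y (last P)"
    and P: "walk E P" "edge_lipschitz E h" "\<forall>z\<in>set P. h z \<le> 0"
  shows "2 * h y \<le> int (tree_stretch E T)"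
proof -
  let ?R = "(adj (T - {{x, y}}))\<^sup>*\<^sup>* x"
  have "\<not> ?R (last P)"
    using cut adj_rtranclp_sym rtranclp_trans by metis
  then obtain i where i: "i < length P - 1" "?R (P ! i)" "\<not> ?R (P ! Suc i)" "{P ! i, P ! Suc i} \<in> E"
    using walk_crossing[where P = ?R, OF P(1) cut(2)] by blast
  define a b where "a = P ! i" and "b = P ! Suc i"
  have ab: "a \<in> set P" "b \<in> set P" "a \<in> V" "b \<in> V"
    using i(1,4) T(2) by (auto simp: a_def b_def)
  have TE: "T \<subseteq> E" "connected_graph V T"
    using T(1) by (auto simp: spanning_tree_def)
  obtain W where W: "walk T W" "hd W = a" "last W = b" "length W = Suc (gdist T a b)"
    using shortest_walk_exists[OF TE(2) ab(3,4)] .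
  have "y \<in> set W"
    using walk_crosses_cut_edge[OF W(1)] W(2,3) i(2,3) by (simp add: a_def b_def)
  then have "2 * h y \<le> int (gdist T a b) + h a + h b"
    using walk_through_vertex_bound[OF W(1) edge_lipschitz_subset[OF P(2) TE(1)]] W by simp
  also have "\<dots> \<le> int (gdist T a b)"
    using P(3) ab(1,2) by (simp add: add_nonpos_nonpos)
  also have "\<dots> \<le> int (tree_stretch E T)"
    using gdist_le_tree_stretch[of E a b T] i(4) T(2,3) finite_subset by (auto simp: a_def b_def)
  finally show ?thesis .
qed

lemma tree_cut_at_level:
  assumes "spanning_tree V E T" "\<Union>E \<subseteq> V" "p \<in> V" "q \<in> V"
    and "edge_lipschitz E g" "g p < K" "K \<le> g q"
  obtains x y where "y \<in> V" "g y = K" "\<not> (adj (T - {{x, y}}))\<^sup>*\<^sup>* x y"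
    "(adj (T - {{x, y}}))\<^sup>*\<^sup>* x p" "(adj (T - {{x, y}}))\<^sup>*\<^sup>* y q"
proof -
  have T: "T \<subseteq> E" "connected_graph V T" "acyclic_graph T" "\<Union>T \<subseteq> V"
    using assms(1,2) by (auto simp: spanning_tree_def)
  then have "(adj T)\<^sup>*\<^sup>* p q"
    using assms(3,4) connected_graph_iff_rtranclp by blast
  then obtain W where W: "walk T W" "hd W = p" "last W = q" "distinct W"
    by (rule rtranclp_imp_distinct_walk)
  then obtain j where j: "j < length W - 1" "g (W ! j) < K" "\<not> g (W ! Suc j) < K"
    "{W ! j, W ! Suc j} \<in> T"
    using walk_crossing[of T W "\<lambda>z. g z < K"] assms(6,7) by auto
  define x y where "x = W ! j" and "y = W ! Suc j"
  have "\<bar>g x - g y\<bar> \<le> 1"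
    using edge_lipschitz_subset[OF assms(5) T(1)] j(4) by (simp add: edge_lipschitz_def x_def y_def)
  then have "g y = K" "x \<noteq> y"
    using j(2,3) by (auto simp: x_def y_def)
  moreover have "y \<in> V"
    using j(4) T(4) by (auto simp: y_def)
  moreover have "\<not> (adj (T - {{x, y}}))\<^sup>*\<^sup>* x y"
    using acyclic_edge_separates[OF T(3)] j(4) \<open>x \<noteq> y\<close> by (simp add: x_def y_def)
  moreover have "(adj (T - {{x, y}}))\<^sup>*\<^sup>* x p" "(adj (T - {{x, y}}))\<^sup>*\<^sup>* y q"
    using distinct_walk_split_at_edge[OF W(1,4) j(1)] W(2,3) adj_rtranclp_sym
    by (auto simp: x_def y_def)
  ultimately show thesis
    using that by blast
qed

lemma level_vertex_bounds_tree_stretch: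
  assumes "spanning_tree V E T" "\<Union>E \<subseteq> V" "finite V" "p \<in> V" "q \<in> V"
    and "edge_lipschitz E g" "g p < K" "K \<le> g q"
  obtains y where "y \<in> V" "g y = K"
    "\<And>h P. edge_lipschitz E h \<Longrightarrow> walk E P \<Longrightarrow> hd P = p \<Longrightarrow> last P = q \<Longrightarrow>
      \<forall>z\<in>set P. h z \<le> 0 \<Longrightarrow> 2 * h y \<le> int (tree_stretch E T)"
proof -
  obtain x y where xy: "y \<in> V" "g y = K" "\<not> (adj (T - {{x, y}}))\<^sup>*\<^sup>* x y"
    "(adj (T - {{x, y}}))\<^sup>*\<^sup>* x p" "(adj (T - {{x, y}}))\<^sup>*\<^sup>* y q"
    using tree_cut_at_level[OF assms(1,2,4-8)] .
  show thesis
    using cut_vertex_bound[OF assms(1-3) xy(3)] xy by (intro that) auto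
qed

section \<open>The square grid\<close>

lemma grid_edgeI:
  assumes "(a, b) \<in> grid_V n" "(c, d) \<in> grid_V n" "\<bar>a - c\<bar> + \<bar>b - d\<bar> = 1"
  shows "{(a, b), (c, d)} \<in> grid_E n"
  using assms unfolding grid_E_def by blast

lemma grid_edgeE:
  assumes "{u, v} \<in> grid_E n"
  obtains a b c d where "u = (a, b)" "v = (c, d)" "(a, b) \<in> grid_V n" "(c, d) \<in> grid_V n"
    "\<bar>a - c\<bar> + \<bar>b - d\<bar> = 1"
proof -
  obtain a b c d where e: "{u, v} = {(a, b), (c, d)}" "(a, b) \<in> grid_V n" "(c, d) \<in> grid_V n"
    "\<bar>a - c\<bar> + \<bar>b - d\<bar> = 1"
    using assms unfolding grid_E_def by blast
  then consider "u = (a, b)" "v = (c, d)" | "u = (c, d)" "v = (a, b)"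
    by (auto simp: doubleton_eq_iff)
  then show thesis
    using that e(2-4) by cases (auto simp: abs_minus_commute)
qed

lemma grid_edges_subset: "\<Union>(grid_E n) \<subseteq> grid_V n"
proof
  fix w assume "w \<in> \<Union>(grid_E n)"
  then obtain u v where "w \<in> {u, v}" "{u, v} \<in> grid_E n"
    unfolding grid_E_def by blast
  then show "w \<in> grid_V n"
    by (auto elim: grid_edgeE)
qed

lemma grid_edge_lipschitz:
  assumes "\<And>a b c d. \<bar>a - c\<bar> + \<bar>b - d\<bar> = 1 \<Longrightarrow> \<bar>h (a, b) - h (c, d)\<bar> \<le> 1"
  shows "edge_lipschitz (grid_E n) h"
  unfolding edge_lipschitz_def using assms by (blast elim: grid_edgeE)

lemma finite_grid_V: "finite (grid_V n)"
  by (simp add: grid_V_def)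

definition grid_walk :: "int \<Rightarrow> int \<Rightarrow> (int \<times> int) list" where
  "grid_walk a b = map (\<lambda>k. if k \<le> a then (k, 1) else (a, k - a + 1)) [1..a + b - 1]"

lemma grid_walk:
  assumes "(a, b) \<in> grid_V n"
  shows "walk (grid_E n) (grid_walk a b)"
    "hd (grid_walk a b) = (1, 1)" "last (grid_walk a b) = (a, b)"
proof -
  have "1 \<le> a + b - 1"
    using assms by (auto simp: grid_V_def)
  then show "walk (grid_E n) (grid_walk a b)"
    unfolding grid_walk_def
  proof (rule walk_map_upto)
    fix k assume "1 \<le> k" "k < a + b - 1"
    then show "{if k \<le> a then (k, 1) else (a, k - a + 1),
        if k + 1 \<le> a then (k + 1, 1) else (a, k + 1 - a + 1)} \<in> grid_E n"
      using assms by (cases "k < a") (simp_all add: grid_edgeI grid_V_def)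
  qed
  show "hd (grid_walk a b) = (1, 1)" "last (grid_walk a b) = (a, b)"
    unfolding grid_walk_def map_upto_ends[OF \<open>1 \<le> a + b - 1\<close>]
    using assms by (auto simp: grid_V_def)
qed

lemma grid_connected: "connected_graph (grid_V n) (grid_E n)"
  using grid_walk by (intro connected_graph_if_walks_from[OF grid_edges_subset]) fastforce

lemma grid_edge_swap: "{u, v} \<in> grid_E n \<Longrightarrow> {prod.swap u, prod.swap v} \<in> grid_E n"
  by (erule grid_edgeE) (auto intro!: grid_edgeI simp: grid_V_def)

lemma grid_stretch_ge:
  assumes "n \<ge> 2"
  shows "n - 1 \<le> stretch (grid_V n) (grid_E n)"
proof (rule stretch_lower_bound[OF finite_grid_V grid_edges_subset grid_connected])
  fix T assume T: "spanning_tree (grid_V n) (grid_E n) T"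
  define N where "N = int n"
  have V: "(1, 1) \<in> grid_V n" "(N, N) \<in> grid_V n"
    using assms by (auto simp: grid_V_def N_def)
  have "edge_lipschitz (grid_E n) (\<lambda>(a, b). a + b)"
    by (rule grid_edge_lipschitz) auto
  then obtain y where "y \<in> grid_V n" and y: "fst y + snd y = N + 1"
    and bound: "\<And>h P. edge_lipschitz (grid_E n) h \<Longrightarrow> walk (grid_E n) P \<Longrightarrow>
      hd P = (1, 1) \<Longrightarrow> last P = (N, N) \<Longrightarrow> \<forall>z\<in>set P. h z \<le> 0 \<Longrightarrow>
      2 * h y \<le> int (tree_stretch (grid_E n) T)"
    using level_vertex_bounds_tree_stretch[OF T grid_edges_subset finite_grid_V V,
        of "\<lambda>(a, b). a + b" "N + 1"] assms
    by (auto simp: N_def case_prod_beta)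
  define h where "h = (\<lambda>(a, b). min (b - 1) (N - a))"
  have lip: "edge_lipschitz (grid_E n) h" "edge_lipschitz (grid_E n) (h \<circ> prod.swap)"
    unfolding h_def by (rule grid_edge_lipschitz, auto)+
  have nonpos: "\<forall>z\<in>set (grid_walk N N). h z \<le> 0"
    by (auto simp: grid_walk_def h_def)
  note P = grid_walk[OF V(2)]
  have "2 * h y \<le> int (tree_stretch (grid_E n) T)"
    using bound[OF lip(1) P nonpos] .
  moreover have "2 * (h \<circ> prod.swap) y \<le> int (tree_stretch (grid_E n) T)"
  proof (rule bound[OF lip(2)])
    show "walk (grid_E n) (map prod.swap (grid_walk N N))"
      using walk_map[OF P(1) grid_edge_swap] .
    have "grid_walk N N \<noteq> []"
      using P(1) by auto
    then show "hd (map prod.swap (grid_walk N N)) = (1, 1)"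
      "last (map prod.swap (grid_walk N N)) = (N, N)"
      using P(2,3) by (simp_all add: hd_map last_map)
    show "\<forall>z\<in>set (map prod.swap (grid_walk N N)). (h \<circ> prod.swap) z \<le> 0"
      using nonpos by auto
  qed
  moreover have "h y + (h \<circ> prod.swap) y = N - 1"
    using y by (auto simp: h_def split: prod.splits)
  ultimately show "n - 1 \<le> tree_stretch (grid_E n) T"
    by (simp add: N_def)
qed

section \<open>The triangular grid\<close>

lemma tri_edgeI:
  assumes "(a, b) \<in> tri_V n" "(c, d) \<in> tri_V n"
    "(c - a, d - b) \<in> {(1, 0), (-1, 0), (0, 1), (0, -1), (1, -1), (-1, 1)}"
  shows "{(a, b), (c, d)} \<in> tri_E n"
  using assms unfolding tri_E_def by blast

lemma tri_edgeE:
  assumes "{u, v} \<in> tri_E n"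
  obtains a b c d where "u = (a, b)" "v = (c, d)" "(a, b) \<in> tri_V n" "(c, d) \<in> tri_V n"
    "\<bar>a - c\<bar> \<le> 1" "\<bar>b - d\<bar> \<le> 1" "\<bar>a + b - c - d\<bar> \<le> 1"
proof -
  obtain a b c d where e: "{u, v} = {(a, b), (c, d)}" "(a, b) \<in> tri_V n" "(c, d) \<in> tri_V n"
    "(c - a, d - b) \<in> {(1, 0), (-1, 0), (0, 1), (0, -1), (1, -1), (-1, 1)}"
    using assms unfolding tri_E_def by blast
  then have "\<bar>a - c\<bar> \<le> 1" "\<bar>b - d\<bar> \<le> 1" "\<bar>a + b - c - d\<bar> \<le> 1"
    "\<bar>c - a\<bar> \<le> 1" "\<bar>d - b\<bar> \<le> 1" "\<bar>c + d - a - b\<bar> \<le> 1"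
    by auto
  moreover consider "u = (a, b)" "v = (c, d)" | "u = (c, d)" "v = (a, b)"
    using e(1) by (auto simp: doubleton_eq_iff)
  ultimately show thesis
    using that e(2,3) by metis
qed

lemma tri_edges_subset: "\<Union>(tri_E n) \<subseteq> tri_V n"
proof
  fix w assume "w \<in> \<Union>(tri_E n)"
  then obtain u v where "w \<in> {u, v}" "{u, v} \<in> tri_E n"
    unfolding tri_E_def by blast
  then show "w \<in> tri_V n"
    by (auto elim: tri_edgeE)
qed

lemma tri_edge_lipschitz:
  assumes "\<And>a b c d. \<bar>a - c\<bar> \<le> 1 \<Longrightarrow> \<bar>b - d\<bar> \<le> 1 \<Longrightarrow> \<bar>a + b - c - d\<bar> \<le> 1 \<Longrightarrow>
    \<bar>h (a, b) - h (c, d)\<bar> \<le> 1"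
  shows "edge_lipschitz (tri_E n) h"
  unfolding edge_lipschitz_def using assms by (blast elim: tri_edgeE)

lemma finite_tri_V: "finite (tri_V n)"
  by (rule finite_subset[of _ "{0..int n} \<times> {0..int n}"]) (auto simp: tri_V_def)

definition tri_walk :: "int \<Rightarrow> int \<Rightarrow> (int \<times> int) list" where
  "tri_walk a b = map (\<lambda>k. if k \<le> a then (k, 0) else (a, k - a)) [0..a + b]"

lemma tri_walk:
  assumes "(a, b) \<in> tri_V n"
  shows "walk (tri_E n) (tri_walk a b)"
    "hd (tri_walk a b) = (0, 0)" "last (tri_walk a b) = (a, b)"
proof -
  have "0 \<le> a + b"
    using assms by (auto simp: tri_V_def)
  then show "walk (tri_E n) (tri_walk a b)"
    unfolding tri_walk_def
  proof (rule walk_map_upto)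
    fix k assume "0 \<le> k" "k < a + b"
    then show "{if k \<le> a then (k, 0) else (a, k - a),
        if k + 1 \<le> a then (k + 1, 0) else (a, k + 1 - a)} \<in> tri_E n"
      using assms by (cases "k < a") (simp_all add: tri_edgeI tri_V_def)
  qed
  show "hd (tri_walk a b) = (0, 0)" "last (tri_walk a b) = (a, b)"
    unfolding tri_walk_def map_upto_ends[OF \<open>0 \<le> a + b\<close>]
    using assms by (auto simp: tri_V_def)
qed

lemma tri_connected: "connected_graph (tri_V n) (tri_E n)"
  using tri_walk by (intro connected_graph_if_walks_from[OF tri_edges_subset]) fastforce

definition tri_perimeter_walk :: "int \<Rightarrow> (int \<times> int) list" where
  "tri_perimeter_walk M = map (\<lambda>k. if k \<le> M then (0, k) else (k - M, 2 * M - k)) [0..2 * M]"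

lemma tri_perimeter_walk:
  assumes "n \<ge> 1"
  defines "M \<equiv> int n - 1"
  shows "walk (tri_E n) (tri_perimeter_walk M)"
    "hd (tri_perimeter_walk M) = (0, 0)" "last (tri_perimeter_walk M) = (M, 0)"
proof -
  have "0 \<le> 2 * M"
    using assms by simp
  then show "walk (tri_E n) (tri_perimeter_walk M)"
    unfolding tri_perimeter_walk_def
  proof (rule walk_map_upto)
    fix k assume "0 \<le> k" "k < 2 * M"
    then show "{if k \<le> M then (0, k) else (k - M, 2 * M - k),
        if k + 1 \<le> M then (0, k + 1) else (k + 1 - M, 2 * M - (k + 1))} \<in> tri_E n"
      by (cases "k < M") (simp_all add: tri_edgeI tri_V_def M_def)
  qed
  show "hd (tri_perimeter_walk M) = (0, 0)" "last (tri_perimeter_walk M) = (M, 0)"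
    unfolding tri_perimeter_walk_def map_upto_ends[OF \<open>0 \<le> 2 * M\<close>] using assms by auto
qed

lemma tri_stretch_ge:
  assumes "n \<ge> 2"
  shows "(n - 1) div 2 \<le> stretch (tri_V n) (tri_E n)"
proof (cases "(n - 1) div 2 = 0")
  case False
  show ?thesis
  proof (rule stretch_lower_bound[OF finite_tri_V tri_edges_subset tri_connected])
    fix T assume T: "spanning_tree (tri_V n) (tri_E n) T"
    define M K where "M = int n - 1" and "K = int ((n - 1) div 2)"
    have K: "1 \<le> K" "2 * K \<le> M"
      using assms False by (simp_all add: M_def K_def)
    have V: "(0, 0) \<in> tri_V n" "(M, 0) \<in> tri_V n"
      using assms by (auto simp: tri_V_def M_def)
    have "edge_lipschitz (tri_E n) fst"
      by (rule tri_edge_lipschitz) auto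
    then obtain y where y: "y \<in> tri_V n" "fst y = K"
      and bound: "\<And>h P. edge_lipschitz (tri_E n) h \<Longrightarrow> walk (tri_E n) P \<Longrightarrow>
        hd P = (0, 0) \<Longrightarrow> last P = (M, 0) \<Longrightarrow> \<forall>z\<in>set P. h z \<le> 0 \<Longrightarrow>
        2 * h y \<le> int (tree_stretch (tri_E n) T)"
      using level_vertex_bounds_tree_stretch[OF T tri_edges_subset finite_tri_V V, of fst K] K
      by auto
    define h where "h = (\<lambda>(a, b). min a (M - a - b))"
    have "edge_lipschitz (tri_E n) snd" "edge_lipschitz (tri_E n) h"
      unfolding h_def by (rule tri_edge_lipschitz, auto)+
    moreover have "\<forall>z\<in>set (tri_walk M 0). snd z \<le> 0" "\<forall>z\<in>set (tri_perimeter_walk M). h z \<le> 0"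
      by (auto simp: tri_walk_def tri_perimeter_walk_def h_def)
    ultimately have "2 * snd y \<le> int (tree_stretch (tri_E n) T)"
      "2 * h y \<le> int (tree_stretch (tri_E n) T)"
      using bound tri_walk[OF V(2)] tri_perimeter_walk[of n] assms by (auto simp: M_def)
    moreover have "K \<le> snd y + h y"
      using y K by (auto simp: h_def tri_V_def M_def split: prod.splits)
    ultimately show "(n - 1) div 2 \<le> tree_stretch (tri_E n) T"
      by (simp add: K_def)
  qed
qed simp

theorem mainTheorem8:
  fixes n :: nat
  assumes "n \<ge> 2"
  shows "stretch (grid_V n) (grid_E n) \<ge> n - 1 \<and> stretch (tri_V n) (tri_E n) \<ge> (n - 1) div 2"
  using grid_stretch_ge[OF assms] tri_stretch_ge[OF assms] by simp

end
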